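(* Let $R$ be a commutative Noetherian ring of prime characteristic $p$, let $b\in\mathbb{N}$, let $W=\bigoplus_{n\geq b}W_n$ be a $\mathbb{Z}$-graded left $R[x,f]$-module (with $W_n=0$ for $n<b$), let $g_1,\ldots,g_t\in W_b$, and let $K:=\{(r_1,\ldots,r_t)\in R^t:\sum_{i=1}^t r_ig_i=0\}$. Then there is a graded left $R[x,f]$-module $W'=\bigoplus_{n\geq b-1}W'_n=(R^t/f^{-1}(K))\oplus W_b\oplus W_{b+1}\oplus\cdots$ (so $W'_{b-1}=R^t/f^{-1}(K)$ and $W'_n=W_n$ for $n\ge b$) which contains $W$ as an $R[x,f]$-submodule and satisfies $x((r_1,\ldots,r_t)+f^{-1}(K))=\sum_{i=1}^t r_i^pg_i$ for all $(r_1,\ldots,r_t)\in R^t$. Moreover, if $W$ is $x$-torsion-free, then so is $W'$, and in that case $\mathcal{G}(W')=\mathcal{G}(W)$ and $\mathcal{I}(W')=\mathcal{I}(W)$.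
   Context: $R[x,f]$ denotes the Frobenius skew polynomial ring over $R$: as a left $R$-module it is free on $(x^i)_{i\in\mathbb{N}_0}$, with multiplication subject to $xr = r^px$; it is graded with $n$th component $Rx^n$. $f:R^t\to R^t$ is the Frobenius map $(r_1,\ldots,r_t)\mapsto(r_1^p,\ldots,r_t^p)$, and $f^{-1}(K)=\{v\in R^t: f(v)\in K\}$. For a left $R[x,f]$-module $M$: $M$ is $x$-torsion-free if $xm=0$ implies $m=0$; $\operatorname{grann}_{R[x,f]}M$ is the largest graded two-sided ideal annihilating $M$; $\mathcal{G}(M)$ is the set of graded annihilators of $R[x,f]$-submodules of $M$; when $M$ is $x$-torsion-free each such graded annihilator has the form $\mathfrak{c}R[x,f]=\bigoplus_n\mathfrak{c}x^n$ for an ideal $\mathfrak{c}$ of $R$, and $\mathcal{I}(M)$ is the set of ideals $\mathfrak{c}$ of $R$ with $\mathfrak{c}R[x,f]=\operatorname{grann}_{R[x,f]}N$ for some $R[x,f]$-submodule $N$ of $M$. *)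

theory Defs
  imports "HOL-Algebra.Module" "HOL-Algebra.Ring_Divisibility"
begin

(* A natural prime number (written out; HOL-Algebra's "prime" is the monoid notion). *)
definition nat_prime :: "nat \<Rightarrow> bool" where
  "nat_prime p \<longleftrightarrow> p \<ge> 2 \<and> (\<forall>d. d dvd p \<longrightarrow> d = 1 \<or> d = p)"

definition ring_char_eq :: "('a, 'c) ring_scheme \<Rightarrow> nat \<Rightarrow> bool" where
  "ring_char_eq R p \<longleftrightarrow> 0 < p \<and> add_pow R p \<one>\<^bsub>R\<^esub> = \<zero>\<^bsub>R\<^esub>
      \<and> (\<forall>n. 0 < n \<and> n < p \<longrightarrow> add_pow R n \<one>\<^bsub>R\<^esub> \<noteq> \<zero>\<^bsub>R\<^esub>)"

(* A left R[x,f]-module, where R[x,f] is the Frobenius skew polynomial ring (x r = r^p x):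
   an R-module M together with the action \<phi> of x, i.e. an additive map with
   \<phi>(r m) = r^p \<phi>(m).  (r x^n acts as m \<mapsto> r \<odot> \<phi>^n m.) *)
definition frob_module :: "('a, 'c) ring_scheme \<Rightarrow> nat \<Rightarrow> ('a, 'm) module \<Rightarrow> ('m \<Rightarrow> 'm) \<Rightarrow> bool" where
  "frob_module R p M \<phi> \<longleftrightarrow> module R M \<and> \<phi> \<in> carrier M \<rightarrow> carrier M
     \<and> (\<forall>m \<in> carrier M. \<forall>n \<in> carrier M. \<phi> (m \<oplus>\<^bsub>M\<^esub> n) = \<phi> m \<oplus>\<^bsub>M\<^esub> \<phi> n)
     \<and> (\<forall>r \<in> carrier R. \<forall>m \<in> carrier M. \<phi> (r \<odot>\<^bsub>M\<^esub> m) = (r [^]\<^bsub>R\<^esub> p) \<odot>\<^bsub>M\<^esub> \<phi> m)"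

definition graded_frob_module ::
  "('a, 'c) ring_scheme \<Rightarrow> nat \<Rightarrow> ('a, 'm) module \<Rightarrow> ('m \<Rightarrow> 'm) \<Rightarrow> (int \<Rightarrow> 'm set) \<Rightarrow> bool" where
  "graded_frob_module R p M \<phi> D \<longleftrightarrow> frob_module R p M \<phi>
     \<and> (\<forall>n. submodule (D n) R M)
     \<and> (\<forall>n. \<phi> ` D n \<subseteq> D (n + 1))
     \<and> (\<forall>m \<in> carrier M. \<exists>!c :: int \<Rightarrow> 'm. (\<forall>n. c n \<in> D n) \<and> finite {n. c n \<noteq> \<zero>\<^bsub>M\<^esub>}
            \<and> m = finsum M c {n. c n \<noteq> \<zero>\<^bsub>M\<^esub>})"

definition frob_submodule :: "('a, 'c) ring_scheme \<Rightarrow> ('a, 'm) module \<Rightarrow> ('m \<Rightarrow> 'm) \<Rightarrow> 'm set \<Rightarrow> bool" where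
  "frob_submodule R M \<phi> N \<longleftrightarrow> submodule N R M \<and> \<phi> ` N \<subseteq> N"

definition x_torsion_free :: "('a, 'm) module \<Rightarrow> ('m \<Rightarrow> 'm) \<Rightarrow> bool" where
  "x_torsion_free M \<phi> \<longleftrightarrow> (\<forall>m \<in> carrier M. \<phi> m = \<zero>\<^bsub>M\<^esub> \<longrightarrow> m = \<zero>\<^bsub>M\<^esub>)"

(* A graded two-sided ideal \<Oplus>_n I_n x^n of R[x,f], given by its components I_n \<subseteq> R:
   each I_n is an ideal of R (closure under left/right multiplication by elements of R),
   closure under left multiplication by x (r \<in> I_n \<Longrightarrow> r^p \<in> I_{n+1}) and under right
   multiplication by x (I_n \<subseteq> I_{n+1}). *)
definition graded_two_sided_ideal :: "('a, 'c) ring_scheme \<Rightarrow> nat \<Rightarrow> (nat \<Rightarrow> 'a set) \<Rightarrow> bool" where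
  "graded_two_sided_ideal R p I \<longleftrightarrow> (\<forall>n. ideal (I n) R)
     \<and> (\<forall>n. \<forall>r \<in> I n. r [^]\<^bsub>R\<^esub> p \<in> I (Suc n))
     \<and> (\<forall>n. I n \<subseteq> I (Suc n))"

definition annihilates :: "('a, 'm) module \<Rightarrow> ('m \<Rightarrow> 'm) \<Rightarrow> (nat \<Rightarrow> 'a set) \<Rightarrow> 'm set \<Rightarrow> bool" where
  "annihilates M \<phi> I N \<longleftrightarrow> (\<forall>n. \<forall>r \<in> I n. \<forall>m \<in> N. r \<odot>\<^bsub>M\<^esub> (\<phi> ^^ n) m = \<zero>\<^bsub>M\<^esub>)"

definition grann :: "('a, 'c) ring_scheme \<Rightarrow> nat \<Rightarrow> ('a, 'm) module \<Rightarrow> ('m \<Rightarrow> 'm) \<Rightarrow> 'm set \<Rightarrow> nat \<Rightarrow> 'a set" where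
  "grann R p M \<phi> N = (THE I. graded_two_sided_ideal R p I \<and> annihilates M \<phi> I N
      \<and> (\<forall>J. graded_two_sided_ideal R p J \<and> annihilates M \<phi> J N \<longrightarrow> (\<forall>n. J n \<subseteq> I n)))"

definition grann_set :: "('a, 'c) ring_scheme \<Rightarrow> nat \<Rightarrow> ('a, 'm) module \<Rightarrow> ('m \<Rightarrow> 'm) \<Rightarrow> (nat \<Rightarrow> 'a set) set" where
  "grann_set R p M \<phi> = {grann R p M \<phi> N | N. frob_submodule R M \<phi> N}"

(* \<I>(M): ideals c of R with c R[x,f] = grann N for some R[x,f]-submodule N *)
definition grann_ideals :: "('a, 'c) ring_scheme \<Rightarrow> nat \<Rightarrow> ('a, 'm) module \<Rightarrow> ('m \<Rightarrow> 'm) \<Rightarrow> 'a set set" where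
  "grann_ideals R p M \<phi> = {c. ideal c R \<and> (\<exists>N. frob_submodule R M \<phi> N \<and> grann R p M \<phi> N = (\<lambda>n. c))}"

(* R^t, represented by functions nat \<Rightarrow> 'a vanishing outside {0..<t} *)
definition vecs :: "('a, 'c) ring_scheme \<Rightarrow> nat \<Rightarrow> (nat \<Rightarrow> 'a) set" where
  "vecs R t = {r. (\<forall>i < t. r i \<in> carrier R) \<and> (\<forall>i \<ge> t. r i = \<zero>\<^bsub>R\<^esub>)}"

definition relations :: "('a, 'c) ring_scheme \<Rightarrow> ('a, 'm) module \<Rightarrow> nat \<Rightarrow> (nat \<Rightarrow> 'm) \<Rightarrow> (nat \<Rightarrow> 'a) set" where
  "relations R M t g = {r \<in> vecs R t. (\<Oplus>\<^bsub>M\<^esub> i \<in> {..<t}. r i \<odot>\<^bsub>M\<^esub> g i) = \<zero>\<^bsub>M\<^esub>}"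

definition frob_preimage :: "('a, 'c) ring_scheme \<Rightarrow> nat \<Rightarrow> nat \<Rightarrow> (nat \<Rightarrow> 'a) set \<Rightarrow> (nat \<Rightarrow> 'a) set" where
  "frob_preimage R p t K = {r \<in> vecs R t. (\<lambda>i. r i [^]\<^bsub>R\<^esub> p) \<in> K}"

definition frob_mono :: "('a, 'c) ring_scheme \<Rightarrow> ('a, 'm) module \<Rightarrow> ('m \<Rightarrow> 'm) \<Rightarrow>
    ('a, 'n) module \<Rightarrow> ('n \<Rightarrow> 'n) \<Rightarrow> ('m \<Rightarrow> 'n) \<Rightarrow> bool" where
  "frob_mono R M \<phi> M' \<phi>' \<iota> \<longleftrightarrow> \<iota> \<in> carrier M \<rightarrow> carrier M' \<and> inj_on \<iota> (carrier M)
     \<and> (\<forall>m \<in> carrier M. \<forall>n \<in> carrier M. \<iota> (m \<oplus>\<^bsub>M\<^esub> n) = \<iota> m \<oplus>\<^bsub>M'\<^esub> \<iota> n)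
     \<and> (\<forall>r \<in> carrier R. \<forall>m \<in> carrier M. \<iota> (r \<odot>\<^bsub>M\<^esub> m) = r \<odot>\<^bsub>M'\<^esub> \<iota> m)
     \<and> (\<forall>m \<in> carrier M. \<iota> (\<phi> m) = \<phi>' (\<iota> m))"

end

theory Submission
  imports Defs "HOL-Computational_Algebra.Primes"
begin

text \<open>The map \<open>r \<mapsto> \<Sum> r\<^sub>i\<^sup>p g\<^sub>i\<close> from \<open>R\<^sup>t\<close> to \<open>W\<^sub>b\<close> is additive by the freshman's dream and has
  kernel \<open>f\<^sup>-\<^sup>1(K)\<close>, so \<open>R\<^sup>t/f\<^sup>-\<^sup>1(K)\<close> is its set of fibres; \<open>x\<close> sends the fibre of \<open>r\<close> to
  \<open>\<Sum> r\<^sub>i\<^sup>p g\<^sub>i\<close> and acts on \<open>W\<close> as before.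
  Torsion-freeness survives because \<open>W\<^sub>b\<close> meets \<open>x W\<close> only in \<open>0\<close>, as \<open>W\<close> vanishes below
  degree \<open>b\<close>. Since \<open>x W' \<subseteq> W\<close>, a submodule \<open>N'\<close> of \<open>W'\<close> and \<open>N' \<inter> W\<close> satisfy
  \<open>ann\<^sub>n(N') \<subseteq> ann\<^sub>n(N' \<inter> W) \<subseteq> ann\<^sub>n\<^sub>+\<^sub>1(N')\<close>, and on an \<open>x\<close>-torsion-free module the annihilator
  components are constant in \<open>n\<close>; so both have the same graded annihilator.\<close>

lemma (in cring) binomial_expansion:
  assumes a: "a \<in> carrier R" and b: "b \<in> carrier R"
  shows "(a \<oplus> b) [^] n = (\<Oplus>k\<in>{..n}. [(n choose k)] \<cdot> (a [^] k \<otimes> b [^] (n - k)))"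
proof (induction n)
  case 0
  then show ?case using a b by simp
next
  case (Suc n)
  define G where "G k = a [^] k \<otimes> b [^] (Suc n - k)" for k
  have G: "G k \<in> carrier R" for k using a b by (simp add: G_def)
  have G_Suc: "G (Suc k) = a [^] k \<otimes> b [^] (n - k) \<otimes> a" if "k \<le> n" for k
    using a b that by (simp add: G_def m_ac)
  have G_same: "G k = a [^] k \<otimes> b [^] (n - k) \<otimes> b" if "k \<le> n" for k
  proof -
    have "Suc n - k = Suc (n - k)" using that by simp
    then show ?thesis using a b by (simp add: G_def m_ac)
  qed
  define c where "c k = (if k = 0 then 0 else n choose (k - 1))" for k
  have "(a \<oplus> b) [^] Suc n = (a \<oplus> b) [^] n \<otimes> a \<oplus> (a \<oplus> b) [^] n \<otimes> b"
    using a b by (simp add: r_distr)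
  also have "(a \<oplus> b) [^] n \<otimes> a = (\<Oplus>k\<in>{..n}. [(n choose k)] \<cdot> G (Suc k))"
    unfolding Suc.IH using a b
    by (subst finsum_ldistr) (auto intro!: finsum_cong' simp: G_Suc add_pow_ldistr)
  also have "\<dots> = (\<Oplus>k\<in>{..Suc n}. [c k] \<cdot> G k)"
    using G finsum_Suc2[of "\<lambda>k. [c k] \<cdot> G k" n] by (simp add: c_def)
  also have "(a \<oplus> b) [^] n \<otimes> b = (\<Oplus>k\<in>{..n}. [(n choose k)] \<cdot> G k)"
    unfolding Suc.IH using a b
    by (subst finsum_ldistr) (auto intro!: finsum_cong' simp: G_same add_pow_ldistr)
  also have "\<dots> = (\<Oplus>k\<in>{..Suc n}. [(n choose k)] \<cdot> G k)"
    using G by (simp add: finsum_Suc binomial_eq_0)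
  also have "(\<Oplus>k\<in>{..Suc n}. [c k] \<cdot> G k) \<oplus> (\<Oplus>k\<in>{..Suc n}. [(n choose k)] \<cdot> G k)
      = (\<Oplus>k\<in>{..Suc n}. [c k] \<cdot> G k \<oplus> [(n choose k)] \<cdot> G k)"
    using G by (simp add: finsum_addf)
  also have "\<dots> = (\<Oplus>k\<in>{..Suc n}. [(Suc n choose k)] \<cdot> (a [^] k \<otimes> b [^] (Suc n - k)))"
  proof (rule finsum_cong')
    fix k
    show "[c k] \<cdot> G k \<oplus> [(n choose k)] \<cdot> G k = [(Suc n choose k)] \<cdot> (a [^] k \<otimes> b [^] (Suc n - k))"
    proof (cases k)
      case 0
      then show ?thesis using G a b by (simp add: G_def c_def)
    next
      case (Suc j)
      then show ?thesis
        using a b add.nat_pow_mult[of "a [^] j \<otimes> a \<otimes> b [^] (n - j)" "n choose j" "n choose Suc j"]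
        by (simp add: G_def c_def add.commute)
    qed
  qed (use a b in auto)
  finally show ?case .
qed

lemma (in cring) frobenius_add:
  assumes a: "a \<in> carrier R" and b: "b \<in> carrier R"
    and p: "prime (p::nat)" and char: "[p] \<cdot> \<one> = \<zero>"
  shows "(a \<oplus> b) [^] p = a [^] p \<oplus> b [^] p"
proof -
  have inner_vanish: "[(p choose k)] \<cdot> x = \<zero>" if "0 < k" "k < p" "x \<in> carrier R" for k x
  proof -
    have "p dvd (p choose k)" by (rule dvd_choose_prime) (use that p in auto)
    then obtain m where m: "p choose k = p * m" by (auto elim: dvdE)
    have "[p] \<cdot> x = \<zero>" using that char add_pow_ldistr[of \<one> x p] by simp
    then show ?thesis using m that add.nat_pow_pow[of x p m] add.nat_pow_pow[of x m p]
      by (metis add.nat_pow_one mult.commute)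
  qed
  have "(a \<oplus> b) [^] p
      = (\<Oplus>k\<in>{..p}. (if k = p then a [^] p else \<zero>) \<oplus> (if k = 0 then b [^] p else \<zero>))"
    unfolding binomial_expansion[OF a b]
  proof (rule finsum_cong')
    fix k assume "k \<in> {..p}"
    then show "[(p choose k)] \<cdot> (a [^] k \<otimes> b [^] (p - k))
        = (if k = p then a [^] p else \<zero>) \<oplus> (if k = 0 then b [^] p else \<zero>)"
      using p a b inner_vanish[of k "a [^] k \<otimes> b [^] (p - k)"] by (auto simp: prime_gt_0_nat)
  qed (use a b in auto)
  also have "\<dots> = a [^] p \<oplus> b [^] p"
    using a b add.finprod_singleton_swap[of p "{..p}" "\<lambda>k. a [^] p"]
      add.finprod_singleton_swap[of 0 "{..p}" "\<lambda>k. b [^] p"]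
    by (simp add: finsum_addf)
  finally show ?thesis .
qed

lemma nat_prime_iff_prime: "nat_prime p \<longleftrightarrow> prime p"
  unfolding nat_prime_def prime_nat_iff by auto

lemma (in abelian_monoid) finsum_support_superset:
  assumes "finite S" and "{n. f n \<noteq> \<zero>} \<subseteq> S" and "f \<in> S \<rightarrow> carrier G"
  shows "finsum G f {n. f n \<noteq> \<zero>} = finsum G f S"
  using assms by (intro add.finprod_mono_neutral_cong_left) auto

lemma (in module) submoduleI_smult:
  assumes "H \<subseteq> carrier M" and "\<zero>\<^bsub>M\<^esub> \<in> H"
    and add: "\<And>x y. x \<in> H \<Longrightarrow> y \<in> H \<Longrightarrow> x \<oplus>\<^bsub>M\<^esub> y \<in> H"
    and smult: "\<And>a x. a \<in> carrier R \<Longrightarrow> x \<in> H \<Longrightarrow> a \<odot>\<^bsub>M\<^esub> x \<in> H"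
  shows "submodule H R M"
proof (rule submoduleI)
  fix x assume x: "x \<in> H"
  then have "\<ominus>\<^bsub>M\<^esub> x = (\<ominus> \<one>) \<odot>\<^bsub>M\<^esub> x"
    using assms(1) smult_l_minus[of \<one> x] by auto
  then show "\<ominus>\<^bsub>M\<^esub> x \<in> H" using smult x by simp
qed (use assms in auto)

lemma (in module) submodule_zero_closed: "submodule H R M \<Longrightarrow> \<zero>\<^bsub>M\<^esub> \<in> H"
  unfolding submodule_def subgroup_def by auto

definition ann_component ::
    "('a, 'c) ring_scheme \<Rightarrow> ('a, 'm) module \<Rightarrow> ('m \<Rightarrow> 'm) \<Rightarrow> 'm set \<Rightarrow> nat \<Rightarrow> 'a set" where
  "ann_component R M \<phi> N n = {r \<in> carrier R. \<forall>m \<in> N. r \<odot>\<^bsub>M\<^esub> (\<phi> ^^ n) m = \<zero>\<^bsub>M\<^esub>}"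

lemma ann_component_antimono: "N \<subseteq> N' \<Longrightarrow> ann_component R M \<phi> N' n \<subseteq> ann_component R M \<phi> N n"
  by (auto simp: ann_component_def)

lemma ann_component_Suc: "ann_component R M \<phi> N (Suc n) = ann_component R M \<phi> (\<phi> ` N) n"
  by (simp add: ann_component_def funpow_Suc_right del: funpow.simps)

locale frobenius_module = module R M
  for R :: "('a, 'c) ring_scheme" and M :: "('a, 'm) module" +
  fixes p :: nat and \<phi> :: "'m \<Rightarrow> 'm"
  assumes frob_module: "frob_module R p M \<phi>"
begin

lemma frob_closed [simp]: "m \<in> carrier M \<Longrightarrow> \<phi> m \<in> carrier M"
  using frob_module unfolding frob_module_def by auto

lemma frob_add: "m \<in> carrier M \<Longrightarrow> n \<in> carrier M \<Longrightarrow> \<phi> (m \<oplus>\<^bsub>M\<^esub> n) = \<phi> m \<oplus>\<^bsub>M\<^esub> \<phi> n"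
  using frob_module unfolding frob_module_def by auto

lemma frob_smult: "r \<in> carrier R \<Longrightarrow> m \<in> carrier M \<Longrightarrow> \<phi> (r \<odot>\<^bsub>M\<^esub> m) = (r [^]\<^bsub>R\<^esub> p) \<odot>\<^bsub>M\<^esub> \<phi> m"
  using frob_module unfolding frob_module_def by auto

lemma frob_zero [simp]: "\<phi> \<zero>\<^bsub>M\<^esub> = \<zero>\<^bsub>M\<^esub>"
  using frob_add[of "\<zero>\<^bsub>M\<^esub>" "\<zero>\<^bsub>M\<^esub>"] frob_closed[of "\<zero>\<^bsub>M\<^esub>"]
  by (metis M.add.right_cancel M.l_zero M.zero_closed)

lemma frob_minus: "m \<in> carrier M \<Longrightarrow> \<phi> (\<ominus>\<^bsub>M\<^esub> m) = \<ominus>\<^bsub>M\<^esub> \<phi> m"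
  using frob_add[of "\<ominus>\<^bsub>M\<^esub> m" m] by (metis M.add.inv_closed M.l_neg M.minus_equality frob_closed frob_zero)

lemma frob_finsum:
  "finite S \<Longrightarrow> f \<in> S \<rightarrow> carrier M \<Longrightarrow> \<phi> (finsum M f S) = finsum M (\<lambda>i. \<phi> (f i)) S"
  by (induction S rule: finite_induct) (auto simp: frob_add Pi_iff)

lemma funpow_frob_closed [simp]: "m \<in> carrier M \<Longrightarrow> (\<phi> ^^ n) m \<in> carrier M"
  by (induction n) auto

lemma frob_submodule_subset: "frob_submodule R M \<phi> N \<Longrightarrow> N \<subseteq> carrier M"
  unfolding frob_submodule_def using submoduleE(1) by blast

lemma ideal_ann_component:
  assumes "N \<subseteq> carrier M"
  shows "ideal (ann_component R M \<phi> N n) R"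
proof (rule idealI[OF R.ring_axioms])
  let ?A = "ann_component R M \<phi> N n"
  have orbit: "(\<phi> ^^ n) m \<in> carrier M" if "m \<in> N" for m
    using that assms by auto
  show "subgroup ?A (add_monoid R)"
    by (rule R.add.subgroupI)
      (use orbit in \<open>auto simp: ann_component_def smult_l_minus smult_l_distr intro!: exI[of _ "\<zero>\<^bsub>R\<^esub>"]\<close>)
  fix a x assume a: "a \<in> ?A" and x: "x \<in> carrier R"
  then show xa: "x \<otimes>\<^bsub>R\<^esub> a \<in> ?A"
    using orbit by (auto simp: ann_component_def smult_assoc1)
  show "a \<otimes>\<^bsub>R\<^esub> x \<in> ?A"
    using xa a x by (simp add: R.m_comm ann_component_def)
qed

lemma graded_two_sided_ideal_ann_component:
  assumes N: "frob_submodule R M \<phi> N"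
  shows "graded_two_sided_ideal R p (ann_component R M \<phi> N)"
  unfolding graded_two_sided_ideal_def
proof (intro conjI allI ballI subsetI)
  fix n
  have N_carrier: "N \<subseteq> carrier M" by (rule frob_submodule_subset[OF N])
  then show "ideal (ann_component R M \<phi> N n) R" by (rule ideal_ann_component)
  fix r assume r: "r \<in> ann_component R M \<phi> N n"
  then have r_carrier: "r \<in> carrier R" by (simp add: ann_component_def)
  have "\<phi> (r \<odot>\<^bsub>M\<^esub> (\<phi> ^^ n) m) = r [^]\<^bsub>R\<^esub> p \<odot>\<^bsub>M\<^esub> (\<phi> ^^ Suc n) m" if "m \<in> N" for m
    using that N_carrier r_carrier by (auto simp: frob_smult)
  then show "r [^]\<^bsub>R\<^esub> p \<in> ann_component R M \<phi> N (Suc n)"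
    using r by (auto simp: ann_component_def)
  have "\<phi> m \<in> N" if "m \<in> N" for m
    using N that by (auto simp: frob_submodule_def)
  then show "r \<in> ann_component R M \<phi> N (Suc n)"
    using r by (simp add: ann_component_def funpow_Suc_right del: funpow.simps)
qed

lemma grann_eq_ann_component:
  assumes N: "frob_submodule R M \<phi> N"
  shows "grann R p M \<phi> N = ann_component R M \<phi> N"
  unfolding grann_def
proof (rule the_equality)
  have largest: "\<forall>n. J n \<subseteq> ann_component R M \<phi> N n"
    if "graded_two_sided_ideal R p J" "annihilates M \<phi> J N" for J
    using that ideal.axioms(1)[THEN additive_subgroup.a_subset]
    by (fastforce simp: graded_two_sided_ideal_def annihilates_def ann_component_def)
  then show "graded_two_sided_ideal R p (ann_component R M \<phi> N) \<and> annihilates M \<phi> (ann_component R M \<phi> N) N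
      \<and> (\<forall>J. graded_two_sided_ideal R p J \<and> annihilates M \<phi> J N \<longrightarrow> (\<forall>n. J n \<subseteq> ann_component R M \<phi> N n))"
    using graded_two_sided_ideal_ann_component[OF N] by (auto simp: annihilates_def ann_component_def)
  fix I assume I: "graded_two_sided_ideal R p I \<and> annihilates M \<phi> I N
      \<and> (\<forall>J. graded_two_sided_ideal R p J \<and> annihilates M \<phi> J N \<longrightarrow> (\<forall>n. J n \<subseteq> I n))"
  have "annihilates M \<phi> (ann_component R M \<phi> N) N"
    by (auto simp: annihilates_def ann_component_def)
  then have "\<forall>n. ann_component R M \<phi> N n \<subseteq> I n"
    using I graded_two_sided_ideal_ann_component[OF N] by blast
  then show "I = ann_component R M \<phi> N"
    using I largest by (intro ext subset_antisym) auto
qed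

lemma ann_component_Suc_subset:
  assumes tf: "x_torsion_free M \<phi>" and N: "N \<subseteq> carrier M" and p: "0 < p"
  shows "ann_component R M \<phi> N (Suc n) \<subseteq> ann_component R M \<phi> N n"
proof
  fix r assume r: "r \<in> ann_component R M \<phi> N (Suc n)"
  then have r_carrier: "r \<in> carrier R" by (simp add: ann_component_def)
  have "r \<odot>\<^bsub>M\<^esub> (\<phi> ^^ n) m = \<zero>\<^bsub>M\<^esub>" if m: "m \<in> N" for m
  proof -
    define y where "y = (\<phi> ^^ n) m"
    have y: "y \<in> carrier M" using m N by (auto simp: y_def)
    have "r [^]\<^bsub>R\<^esub> p = r [^]\<^bsub>R\<^esub> (p - 1) \<otimes>\<^bsub>R\<^esub> r"
      using p R.nat_pow_Suc[of r "p - 1"] by simp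
    then have "\<phi> (r \<odot>\<^bsub>M\<^esub> y) = r [^]\<^bsub>R\<^esub> (p - 1) \<odot>\<^bsub>M\<^esub> (r \<odot>\<^bsub>M\<^esub> \<phi> y)"
      using r_carrier y by (simp add: frob_smult smult_assoc1)
    also have "r \<odot>\<^bsub>M\<^esub> \<phi> y = \<zero>\<^bsub>M\<^esub>"
      using r m by (simp add: ann_component_def y_def)
    finally show ?thesis
      using tf r_carrier y unfolding x_torsion_free_def y_def by simp
  qed
  then show "r \<in> ann_component R M \<phi> N n"
    using r_carrier by (simp add: ann_component_def)
qed

end

lemma grann_in_grann_set: "frob_submodule R M \<phi> N \<Longrightarrow> grann R p M \<phi> N \<in> grann_set R p M \<phi>"
  unfolding grann_set_def by blast

lemma grann_ideals_eq_grann_set: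
  "grann_ideals R p M \<phi> = {c. ideal c R \<and> (\<lambda>n. c) \<in> grann_set R p M \<phi>}"
  unfolding grann_ideals_def grann_set_def mem_Collect_eq by (metis (no_types, lifting))

context
  fixes R :: "('a, 'c) ring_scheme" and p :: nat
    and M :: "('a, 'm) module" and \<phi> :: "'m \<Rightarrow> 'm"
    and M' :: "('a, 'n) module" and \<phi>' :: "'n \<Rightarrow> 'n" and \<iota> :: "'m \<Rightarrow> 'n"
  assumes source: "frobenius_module R M p \<phi>" and target: "frobenius_module R M' p \<phi>'"
    and embedding: "frob_mono R M \<phi> M' \<phi>' \<iota>"
begin

interpretation src: frobenius_module R M p \<phi> by (rule source)
interpretation tgt: frobenius_module R M' p \<phi>' by (rule target)

lemma frob_mono_closed: "m \<in> carrier M \<Longrightarrow> \<iota> m \<in> carrier M'"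
  using embedding by (auto simp: frob_mono_def)

lemma frob_mono_add: "m \<in> carrier M \<Longrightarrow> n \<in> carrier M \<Longrightarrow> \<iota> (m \<oplus>\<^bsub>M\<^esub> n) = \<iota> m \<oplus>\<^bsub>M'\<^esub> \<iota> n"
  using embedding by (simp add: frob_mono_def)

lemma frob_mono_smult: "r \<in> carrier R \<Longrightarrow> m \<in> carrier M \<Longrightarrow> \<iota> (r \<odot>\<^bsub>M\<^esub> m) = r \<odot>\<^bsub>M'\<^esub> \<iota> m"
  using embedding by (simp add: frob_mono_def)

lemma frob_mono_zero: "\<iota> \<zero>\<^bsub>M\<^esub> = \<zero>\<^bsub>M'\<^esub>"
  using frob_mono_add[of "\<zero>\<^bsub>M\<^esub>" "\<zero>\<^bsub>M\<^esub>"] frob_mono_closed[of "\<zero>\<^bsub>M\<^esub>"]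
  by (metis src.M.l_zero src.M.zero_closed tgt.M.add.right_cancel tgt.M.l_zero tgt.M.zero_closed)

lemma frob_mono_eq_zero_iff: "m \<in> carrier M \<Longrightarrow> \<iota> m = \<zero>\<^bsub>M'\<^esub> \<longleftrightarrow> m = \<zero>\<^bsub>M\<^esub>"
  using embedding frob_mono_zero by (metis frob_mono_def inj_on_eq_iff src.M.zero_closed)

lemma frob_mono_funpow: "m \<in> carrier M \<Longrightarrow> \<iota> ((\<phi> ^^ n) m) = (\<phi>' ^^ n) (\<iota> m)"
  using embedding by (induction n) (auto simp: frob_mono_def)

lemma submodule_image_frob_mono:
  assumes N: "submodule N R M"
  shows "submodule (\<iota> ` N) R M'"
proof -
  have N_carrier: "N \<subseteq> carrier M" by (rule src.submoduleE(1)[OF N])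
  show ?thesis
  proof (rule tgt.submoduleI_smult)
    show "\<iota> ` N \<subseteq> carrier M'" using N_carrier frob_mono_closed by auto
    show "\<zero>\<^bsub>M'\<^esub> \<in> \<iota> ` N" using frob_mono_zero src.submodule_zero_closed[OF N] by force
  next
    fix x y assume "x \<in> \<iota> ` N" and "y \<in> \<iota> ` N"
    then obtain x' y' where x': "x' \<in> N" "x = \<iota> x'" and y': "y' \<in> N" "y = \<iota> y'"
      by (elim imageE)
    then have "x \<oplus>\<^bsub>M'\<^esub> y = \<iota> (x' \<oplus>\<^bsub>M\<^esub> y')"
      using N_carrier by (simp add: frob_mono_add subsetD)
    then show "x \<oplus>\<^bsub>M'\<^esub> y \<in> \<iota> ` N"
      using x' y' src.submoduleE(5)[OF N] by simp
  next
    fix a x assume a: "a \<in> carrier R" and "x \<in> \<iota> ` N"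
    then obtain x' where x': "x' \<in> N" "x = \<iota> x'" by (elim imageE)
    then have "a \<odot>\<^bsub>M'\<^esub> x = \<iota> (a \<odot>\<^bsub>M\<^esub> x')"
      using a N_carrier by (simp add: frob_mono_smult subsetD)
    then show "a \<odot>\<^bsub>M'\<^esub> x \<in> \<iota> ` N"
      using a x' src.submoduleE(4)[OF N] by simp
  qed
qed

lemma frob_submodule_image_frob_mono:
  assumes N: "frob_submodule R M \<phi> N"
  shows "frob_submodule R M' \<phi>' (\<iota> ` N)"
proof -
  have "\<phi>' (\<iota> m) \<in> \<iota> ` N" if "m \<in> N" for m
  proof -
    have "\<phi>' (\<iota> m) = \<iota> (\<phi> m)"
      using that src.frob_submodule_subset[OF N] frob_mono_funpow[of m 1] by auto
    moreover have "\<phi> m \<in> N" using that N by (auto simp: frob_submodule_def)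
    ultimately show ?thesis by blast
  qed
  then show ?thesis
    using N submodule_image_frob_mono by (auto simp: frob_submodule_def)
qed

lemma frob_submodule_vimage_frob_mono:
  assumes N': "frob_submodule R M' \<phi>' N'"
  shows "frob_submodule R M \<phi> {m \<in> carrier M. \<iota> m \<in> N'}"
proof -
  have sub: "submodule N' R M'" using N' by (simp add: frob_submodule_def)
  have "submodule {m \<in> carrier M. \<iota> m \<in> N'} R M"
  proof (rule src.submoduleI_smult)
    show "\<zero>\<^bsub>M\<^esub> \<in> {m \<in> carrier M. \<iota> m \<in> N'}"
      using frob_mono_zero tgt.submodule_zero_closed[OF sub] by simp
  qed (use tgt.submoduleE(4,5)[OF sub] in \<open>auto simp: frob_mono_add frob_mono_smult\<close>)
  moreover have "\<phi> ` {m \<in> carrier M. \<iota> m \<in> N'} \<subseteq> {m \<in> carrier M. \<iota> m \<in> N'}"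
    using N' embedding by (auto simp: frob_submodule_def frob_mono_def)
  ultimately show ?thesis by (simp add: frob_submodule_def)
qed

lemma ann_component_image_frob_mono:
  assumes "N \<subseteq> carrier M"
  shows "ann_component R M' \<phi>' (\<iota> ` N) = ann_component R M \<phi> N"
proof -
  have "r \<odot>\<^bsub>M'\<^esub> (\<phi>' ^^ n) (\<iota> m) = \<zero>\<^bsub>M'\<^esub> \<longleftrightarrow> r \<odot>\<^bsub>M\<^esub> (\<phi> ^^ n) m = \<zero>\<^bsub>M\<^esub>"
    if "r \<in> carrier R" "m \<in> N" for r m n
  proof -
    have "r \<odot>\<^bsub>M'\<^esub> (\<phi>' ^^ n) (\<iota> m) = \<iota> (r \<odot>\<^bsub>M\<^esub> (\<phi> ^^ n) m)"
      using that assms by (auto simp: frob_mono_funpow frob_mono_smult)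
    then show ?thesis
      using that assms by (simp add: frob_mono_eq_zero_iff subset_iff)
  qed
  then show ?thesis
    by (auto simp: ann_component_def fun_eq_iff)
qed

lemma grann_set_eq_frob_mono:
  assumes onto: "\<phi>' ` carrier M' \<subseteq> \<iota> ` carrier M"
    and tf: "x_torsion_free M' \<phi>'" and p: "0 < p"
  shows "grann_set R p M' \<phi>' = grann_set R p M \<phi>"
proof (intro equalityI subsetI)
  fix G assume "G \<in> grann_set R p M \<phi>"
  then obtain N where N: "frob_submodule R M \<phi> N" and G: "G = grann R p M \<phi> N"
    by (auto simp: grann_set_def)
  have "G = grann R p M' \<phi>' (\<iota> ` N)"
    using N G frob_submodule_image_frob_mono src.frob_submodule_subset
    by (simp add: src.grann_eq_ann_component tgt.grann_eq_ann_component ann_component_image_frob_mono)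
  then show "G \<in> grann_set R p M' \<phi>'"
    using grann_in_grann_set[OF frob_submodule_image_frob_mono[OF N]] by metis
next
  fix G assume "G \<in> grann_set R p M' \<phi>'"
  then obtain N' where N': "frob_submodule R M' \<phi>' N'" and G: "G = grann R p M' \<phi>' N'"
    by (auto simp: grann_set_def)
  define N where "N = {m \<in> carrier M. \<iota> m \<in> N'}"
  have N: "frob_submodule R M \<phi> N"
    unfolding N_def by (rule frob_submodule_vimage_frob_mono[OF N'])
  have N'_carrier: "N' \<subseteq> carrier M'" by (rule tgt.frob_submodule_subset[OF N'])
  have ann_eq: "ann_component R M' \<phi>' N' n = ann_component R M \<phi> N n" for n
  proof (rule subset_antisym)
    have "\<iota> ` N \<subseteq> N'" by (auto simp: N_def)
    then show "ann_component R M' \<phi>' N' n \<subseteq> ann_component R M \<phi> N n"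
      using ann_component_image_frob_mono[of N] ann_component_antimono[of "\<iota> ` N" N' R M' \<phi>' n]
      by (simp add: N_def)
    have "\<phi>' ` N' \<subseteq> \<iota> ` N"
    proof
      fix y assume "y \<in> \<phi>' ` N'"
      moreover have "\<phi>' ` N' \<subseteq> N'" using N' by (simp add: frob_submodule_def)
      moreover have "\<phi>' ` N' \<subseteq> \<iota> ` carrier M" using onto N'_carrier by (meson image_mono order_trans)
      ultimately have "y \<in> N'" "y \<in> \<iota> ` carrier M" by blast+
      then show "y \<in> \<iota> ` N" by (auto simp: N_def)
    qed
    then have "ann_component R M' \<phi>' (\<iota> ` N) n \<subseteq> ann_component R M' \<phi>' N' (Suc n)"
      unfolding ann_component_Suc by (rule ann_component_antimono)
    also have "\<dots> \<subseteq> ann_component R M' \<phi>' N' n"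
      by (rule tgt.ann_component_Suc_subset[OF tf N'_carrier p])
    finally show "ann_component R M \<phi> N n \<subseteq> ann_component R M' \<phi>' N' n"
      using ann_component_image_frob_mono[of N] by (simp add: N_def)
  qed
  have "G = grann R p M \<phi> N"
    unfolding G tgt.grann_eq_ann_component[OF N'] src.grann_eq_ann_component[OF N]
    using ann_eq by (rule ext)
  then show "G \<in> grann_set R p M \<phi>"
    using grann_in_grann_set[OF N] by metis
qed

end

locale graded_frobenius_module = frobenius_module R M p \<phi>
  for R :: "('a, 'c) ring_scheme" and M :: "('a, 'm) module" and p \<phi> +
  fixes D :: "int \<Rightarrow> 'm set"
  assumes graded: "graded_frob_module R p M \<phi> D"
begin

lemma component_submodule: "submodule (D n) R M"
  using graded by (simp add: graded_frob_module_def)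

lemma component_subset: "D n \<subseteq> carrier M"
  using submoduleE(1)[OF component_submodule] .

lemma zero_in_component [simp]: "\<zero>\<^bsub>M\<^esub> \<in> D n"
  using submodule_zero_closed[OF component_submodule] .

lemma component_add: "x \<in> D n \<Longrightarrow> y \<in> D n \<Longrightarrow> x \<oplus>\<^bsub>M\<^esub> y \<in> D n"
  using submoduleE(5)[OF component_submodule] by blast

lemma component_smult: "a \<in> carrier R \<Longrightarrow> x \<in> D n \<Longrightarrow> a \<odot>\<^bsub>M\<^esub> x \<in> D n"
  using submoduleE(4)[OF component_submodule] by blast

lemma component_finsum: "finite A \<Longrightarrow> f \<in> A \<rightarrow> D n \<Longrightarrow> finsum M f A \<in> D n"
proof (induction A rule: finite_induct)
  case (insert x A)
  then have "f \<in> A \<rightarrow> carrier M" "f x \<in> carrier M" using component_subset by blast+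
  then show ?case using insert by (simp add: component_add)
qed simp

lemma frob_component: "x \<in> D n \<Longrightarrow> \<phi> x \<in> D (n + 1)"
  using graded by (auto simp: graded_frob_module_def)

lemma graded_decomposition:
  "m \<in> carrier M \<Longrightarrow> \<exists>!c. (\<forall>n. c n \<in> D n) \<and> finite {n. c n \<noteq> \<zero>\<^bsub>M\<^esub>}
      \<and> m = finsum M c {n. c n \<noteq> \<zero>\<^bsub>M\<^esub>}"
  using graded by (simp add: graded_frob_module_def)

lemma graded_decomposition_unique:
  assumes c: "\<forall>n. c n \<in> D n" and d: "\<forall>n. d n \<in> D n"
    and S: "finite S" "{n. c n \<noteq> \<zero>\<^bsub>M\<^esub>} \<subseteq> S"
    and T: "finite T" "{n. d n \<noteq> \<zero>\<^bsub>M\<^esub>} \<subseteq> T"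
    and eq: "finsum M c S = finsum M d T"
  shows "c = d"
proof -
  have c_carrier: "c \<in> S \<rightarrow> carrier M" and d_carrier: "d \<in> T \<rightarrow> carrier M"
    using c d component_subset by blast+
  have "finsum M c {n. c n \<noteq> \<zero>\<^bsub>M\<^esub>} = finsum M c S"
    by (rule finsum_support_superset[OF S c_carrier])
  moreover have "finsum M d {n. d n \<noteq> \<zero>\<^bsub>M\<^esub>} = finsum M d T"
    by (rule finsum_support_superset[OF T d_carrier])
  moreover have "finite {n. c n \<noteq> \<zero>\<^bsub>M\<^esub>}" "finite {n. d n \<noteq> \<zero>\<^bsub>M\<^esub>}"
    using S T finite_subset by auto
  moreover have "finsum M c S \<in> carrier M" using c_carrier by simp
  ultimately show ?thesis
    using graded_decomposition[of "finsum M c S"] c d eq by metis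
qed

text \<open>Since \<open>\<phi>\<close> raises degrees by one, the component of \<open>\<phi> w\<close> in degree \<open>b\<close> is
  \<open>\<phi>\<close> of the component of \<open>w\<close> in degree \<open>b - 1\<close>, which vanishes.\<close>

lemma frob_image_meets_bottom_component:
  assumes below: "\<forall>n < b. D n = {\<zero>\<^bsub>M\<^esub>}"
    and u: "u \<in> D b" and w: "w \<in> carrier M" and u_eq: "u = \<phi> w"
  shows "u = \<zero>\<^bsub>M\<^esub>"
proof -
  obtain c where c: "\<forall>n. c n \<in> D n" and S: "finite {n. c n \<noteq> \<zero>\<^bsub>M\<^esub>}"
    and w_sum: "w = finsum M c {n. c n \<noteq> \<zero>\<^bsub>M\<^esub>}"
    using graded_decomposition[OF w] by blast
  define S where "S = {n. c n \<noteq> \<zero>\<^bsub>M\<^esub>}"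
  define e where "e k = \<phi> (c (k - 1))" for k
  have e: "\<forall>k. e k \<in> D k"
    using c frob_component[of "c (k - 1)" "k - 1" for k] by (simp add: e_def)
  have c_carrier: "c \<in> S \<rightarrow> carrier M" using c component_subset by blast
  have "finsum M e ((\<lambda>n. n + 1) ` S) = finsum M (\<lambda>n. \<phi> (c n)) S"
    using c_carrier by (subst finsum_reindex) (auto simp: e_def inj_on_def Pi_iff)
  also have "\<dots> = u"
    using frob_finsum[OF S c_carrier[unfolded S_def]] w_sum u_eq by (simp add: S_def)
  also have "u = finsum M (\<lambda>k. if k = b then u else \<zero>\<^bsub>M\<^esub>) {b}"
    using M.finsum_insert[of "{}" b "\<lambda>k. if k = b then u else \<zero>\<^bsub>M\<^esub>"] u component_subset
    by (simp add: subset_iff)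
  finally have e_sum: "finsum M e ((\<lambda>n. n + 1) ` S) = finsum M (\<lambda>k. if k = b then u else \<zero>\<^bsub>M\<^esub>) {b}" .
  have e_support: "{k. e k \<noteq> \<zero>\<^bsub>M\<^esub>} \<subseteq> (\<lambda>n. n + 1) ` S"
  proof
    fix k assume "k \<in> {k. e k \<noteq> \<zero>\<^bsub>M\<^esub>}"
    then have "k - 1 \<in> S" by (auto simp: e_def S_def)
    then show "k \<in> (\<lambda>n. n + 1) ` S" by (rule rev_image_eqI) simp
  qed
  have "e = (\<lambda>k. if k = b then u else \<zero>\<^bsub>M\<^esub>)"
    by (rule graded_decomposition_unique[OF e _ _ e_support _ _ e_sum])
      (use S u in \<open>auto simp: S_def\<close>)
  then have "u = \<phi> (c (b - 1))" by (metis e_def)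
  also have "c (b - 1) = \<zero>\<^bsub>M\<^esub>" using c below[rule_format, of "b - 1"] by auto
  finally show ?thesis by simp
qed

end

locale frobenius_extension = graded_frobenius_module R W p \<phi> D
  for R :: "('a, 'c) ring_scheme" and W :: "('a, 'm) module" and p \<phi> D +
  fixes t :: nat and b :: int and g :: "nat \<Rightarrow> 'm"
  assumes prime_p: "nat_prime p" and char_p: "ring_char_eq R p"
    and below_b: "\<forall>n < b. D n = {\<zero>\<^bsub>W\<^esub>}" and generators: "\<forall>i < t. g i \<in> D b"
begin

lemma p_pos: "0 < p"
  using prime_p by (simp add: nat_prime_iff_prime prime_gt_0_nat)

lemma frob_pow_add:
  "a \<in> carrier R \<Longrightarrow> c \<in> carrier R \<Longrightarrow> (a \<oplus>\<^bsub>R\<^esub> c) [^]\<^bsub>R\<^esub> p = a [^]\<^bsub>R\<^esub> p \<oplus>\<^bsub>R\<^esub> c [^]\<^bsub>R\<^esub> p"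
  using R.frobenius_add prime_p char_p by (simp add: nat_prime_iff_prime ring_char_eq_def)

lemma generator_carrier [simp]: "i < t \<Longrightarrow> g i \<in> carrier W"
  using generators component_subset by blast

abbreviation V :: "(nat \<Rightarrow> 'a) set" where "V \<equiv> vecs R t"

lemma vecs_iff: "r \<in> V \<longleftrightarrow> (\<forall>i<t. r i \<in> carrier R) \<and> (\<forall>i\<ge>t. r i = \<zero>\<^bsub>R\<^esub>)"
  by (simp add: vecs_def)

lemma zero_vec: "(\<lambda>i. \<zero>\<^bsub>R\<^esub>) \<in> V"
  by (simp add: vecs_iff)

lemma add_vec: "r \<in> V \<Longrightarrow> s \<in> V \<Longrightarrow> (\<lambda>i. r i \<oplus>\<^bsub>R\<^esub> s i) \<in> V"
  by (simp add: vecs_iff)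

lemma smult_vec: "a \<in> carrier R \<Longrightarrow> r \<in> V \<Longrightarrow> (\<lambda>i. a \<otimes>\<^bsub>R\<^esub> r i) \<in> V"
  by (simp add: vecs_iff)

lemma minus_vec: "r \<in> V \<Longrightarrow> (\<lambda>i. \<ominus>\<^bsub>R\<^esub> r i) \<in> V"
  by (simp add: vecs_iff)

lemma frob_vec: "r \<in> V \<Longrightarrow> (\<lambda>i. r i [^]\<^bsub>R\<^esub> p) \<in> V"
  using p_pos by (simp add: vecs_iff R.nat_pow_zero)

definition frob_comb :: "(nat \<Rightarrow> 'a) \<Rightarrow> 'm" where
  "frob_comb r = (\<Oplus>\<^bsub>W\<^esub> i \<in> {..<t}. (r i [^]\<^bsub>R\<^esub> p) \<odot>\<^bsub>W\<^esub> g i)"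

lemma frob_comb_in_bottom: "r \<in> V \<Longrightarrow> frob_comb r \<in> D b"
  unfolding frob_comb_def by (rule component_finsum) (auto simp: vecs_iff generators component_smult)

lemma frob_comb_carrier [simp]: "r \<in> V \<Longrightarrow> frob_comb r \<in> carrier W"
  using frob_comb_in_bottom component_subset by blast

lemma frob_comb_add:
  assumes r: "r \<in> V" and s: "s \<in> V"
  shows "frob_comb (\<lambda>i. r i \<oplus>\<^bsub>R\<^esub> s i) = frob_comb r \<oplus>\<^bsub>W\<^esub> frob_comb s"
proof -
  have "frob_comb (\<lambda>i. r i \<oplus>\<^bsub>R\<^esub> s i)
      = (\<Oplus>\<^bsub>W\<^esub> i \<in> {..<t}. (r i [^]\<^bsub>R\<^esub> p) \<odot>\<^bsub>W\<^esub> g i \<oplus>\<^bsub>W\<^esub> (s i [^]\<^bsub>R\<^esub> p) \<odot>\<^bsub>W\<^esub> g i)"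
    unfolding frob_comb_def
    by (rule M.finsum_cong') (use r s in \<open>auto simp: vecs_iff frob_pow_add smult_l_distr\<close>)
  also have "\<dots> = frob_comb r \<oplus>\<^bsub>W\<^esub> frob_comb s"
    unfolding frob_comb_def by (rule M.finsum_addf) (use r s in \<open>auto simp: vecs_iff\<close>)
  finally show ?thesis .
qed

lemma frob_comb_smult:
  assumes a: "a \<in> carrier R" and r: "r \<in> V"
  shows "frob_comb (\<lambda>i. a \<otimes>\<^bsub>R\<^esub> r i) = (a [^]\<^bsub>R\<^esub> p) \<odot>\<^bsub>W\<^esub> frob_comb r"
proof -
  have "frob_comb (\<lambda>i. a \<otimes>\<^bsub>R\<^esub> r i)
      = (\<Oplus>\<^bsub>W\<^esub> i \<in> {..<t}. (a [^]\<^bsub>R\<^esub> p) \<odot>\<^bsub>W\<^esub> ((r i [^]\<^bsub>R\<^esub> p) \<odot>\<^bsub>W\<^esub> g i))"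
    unfolding frob_comb_def
    by (rule M.finsum_cong') (use a r in \<open>auto simp: vecs_iff R.nat_pow_distrib smult_assoc1\<close>)
  also have "\<dots> = (a [^]\<^bsub>R\<^esub> p) \<odot>\<^bsub>W\<^esub> frob_comb r"
    unfolding frob_comb_def
    by (rule finsum_smult_ldistr[symmetric]) (use a r in \<open>auto simp: vecs_iff\<close>)
  finally show ?thesis .
qed

lemma frob_comb_zero: "frob_comb (\<lambda>i. \<zero>\<^bsub>R\<^esub>) = \<zero>\<^bsub>W\<^esub>"
  using frob_comb_smult[OF R.zero_closed zero_vec] p_pos by (simp add: R.nat_pow_zero zero_vec)

lemma frob_comb_minus:
  assumes r: "r \<in> V"
  shows "frob_comb (\<lambda>i. \<ominus>\<^bsub>R\<^esub> r i) = \<ominus>\<^bsub>W\<^esub> frob_comb r"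
proof (rule M.minus_equality[symmetric])
  have "(\<lambda>i. \<ominus>\<^bsub>R\<^esub> r i \<oplus>\<^bsub>R\<^esub> r i) = (\<lambda>i. \<zero>\<^bsub>R\<^esub>)"
    using r by (auto simp: vecs_iff R.l_neg intro!: ext) (metis R.l_neg R.zero_closed not_less)
  then show "frob_comb (\<lambda>i. \<ominus>\<^bsub>R\<^esub> r i) \<oplus>\<^bsub>W\<^esub> frob_comb r = \<zero>\<^bsub>W\<^esub>"
    using frob_comb_add[OF minus_vec[OF r] r] frob_comb_zero by simp
qed (use r minus_vec in auto)

abbreviation U :: "'m set" where "U \<equiv> frob_comb ` V"

lemma U_subset_bottom: "u \<in> U \<Longrightarrow> u \<in> D b"
  using frob_comb_in_bottom by blast

lemma U_carrier [simp]: "u \<in> U \<Longrightarrow> u \<in> carrier W"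
  by auto

lemma U_zero [simp]: "\<zero>\<^bsub>W\<^esub> \<in> U"
  using zero_vec frob_comb_zero by (intro rev_image_eqI) auto

lemma U_add [simp]:
  assumes "u \<in> U" and "v \<in> U"
  shows "u \<oplus>\<^bsub>W\<^esub> v \<in> U"
proof -
  obtain r s where r: "r \<in> V" "u = frob_comb r" and s: "s \<in> V" "v = frob_comb s"
    using assms by (elim imageE)
  have "(\<lambda>i. r i \<oplus>\<^bsub>R\<^esub> s i) \<in> V" using r s by (simp add: add_vec)
  moreover have "u \<oplus>\<^bsub>W\<^esub> v = frob_comb (\<lambda>i. r i \<oplus>\<^bsub>R\<^esub> s i)" using r s by (simp add: frob_comb_add)
  ultimately show ?thesis by (metis rev_image_eqI)
qed

lemma U_smult [simp]:
  assumes "a \<in> carrier R" and "u \<in> U"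
  shows "(a [^]\<^bsub>R\<^esub> p) \<odot>\<^bsub>W\<^esub> u \<in> U"
proof -
  obtain r where r: "r \<in> V" "u = frob_comb r"
    using assms by (elim imageE)
  have "(\<lambda>i. a \<otimes>\<^bsub>R\<^esub> r i) \<in> V" using r assms by (simp add: smult_vec)
  moreover have "(a [^]\<^bsub>R\<^esub> p) \<odot>\<^bsub>W\<^esub> u = frob_comb (\<lambda>i. a \<otimes>\<^bsub>R\<^esub> r i)"
    using r assms by (simp add: frob_comb_smult)
  ultimately show ?thesis by (metis rev_image_eqI)
qed

lemma U_minus [simp]:
  assumes "u \<in> U"
  shows "\<ominus>\<^bsub>W\<^esub> u \<in> U"
proof -
  obtain r where r: "r \<in> V" "u = frob_comb r"
    using assms by (elim imageE)
  have "(\<lambda>i. \<ominus>\<^bsub>R\<^esub> r i) \<in> V" using r by (simp add: minus_vec)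
  moreover have "\<ominus>\<^bsub>W\<^esub> u = frob_comb (\<lambda>i. \<ominus>\<^bsub>R\<^esub> r i)" using r by (simp add: frob_comb_minus)
  ultimately show ?thesis by (metis rev_image_eqI)
qed

text \<open>A coset \<open>r + f\<^sup>-\<^sup>1(K)\<close> is represented by the fibre of \<open>frob_comb\<close> through \<open>r\<close>; it is
  determined by the value \<open>u = frob_comb r \<in> U\<close>, through which the operations are defined.\<close>

definition fibre :: "'m \<Rightarrow> (nat \<Rightarrow> 'a) set" where
  "fibre u = {s \<in> V. frob_comb s = u}"

definition fibre_value :: "(nat \<Rightarrow> 'a) set \<Rightarrow> 'm" where
  "fibre_value A = frob_comb (SOME s. s \<in> A)"

lemma fibre_value_fibre [simp]: "u \<in> U \<Longrightarrow> fibre_value (fibre u) = u"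
  unfolding fibre_value_def fibre_def by (smt (verit) imageE mem_Collect_eq someI)

lemma fibre_eq_iff [simp]: "u \<in> U \<Longrightarrow> v \<in> U \<Longrightarrow> fibre u = fibre v \<longleftrightarrow> u = v"
  by (metis fibre_value_fibre)

definition W' :: "('a, (nat \<Rightarrow> 'a) set \<times> 'm) module" where
  "W' = \<lparr>carrier = {(fibre u, w) | u w. u \<in> U \<and> w \<in> carrier W},
     mult = (\<lambda>X Y. X), one = (fibre \<zero>\<^bsub>W\<^esub>, \<zero>\<^bsub>W\<^esub>), zero = (fibre \<zero>\<^bsub>W\<^esub>, \<zero>\<^bsub>W\<^esub>),
     add = (\<lambda>X Y. (fibre (fibre_value (fst X) \<oplus>\<^bsub>W\<^esub> fibre_value (fst Y)), snd X \<oplus>\<^bsub>W\<^esub> snd Y)),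
     smult = (\<lambda>a X. (fibre ((a [^]\<^bsub>R\<^esub> p) \<odot>\<^bsub>W\<^esub> fibre_value (fst X)), a \<odot>\<^bsub>W\<^esub> snd X))\<rparr>"

lemma W'_zero: "\<zero>\<^bsub>W'\<^esub> = (fibre \<zero>\<^bsub>W\<^esub>, \<zero>\<^bsub>W\<^esub>)"
  by (simp add: W'_def)

lemma W'_add [simp]:
  "u \<in> U \<Longrightarrow> v \<in> U \<Longrightarrow> (fibre u, w) \<oplus>\<^bsub>W'\<^esub> (fibre v, z) = (fibre (u \<oplus>\<^bsub>W\<^esub> v), w \<oplus>\<^bsub>W\<^esub> z)"
  by (simp add: W'_def)

lemma W'_smult [simp]:
  "u \<in> U \<Longrightarrow> a \<odot>\<^bsub>W'\<^esub> (fibre u, w) = (fibre ((a [^]\<^bsub>R\<^esub> p) \<odot>\<^bsub>W\<^esub> u), a \<odot>\<^bsub>W\<^esub> w)"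
  by (simp add: W'_def)

lemma W'_mem [simp]: "u \<in> U \<Longrightarrow> (fibre u, w) \<in> carrier W' \<longleftrightarrow> w \<in> carrier W"
  by (auto simp: W'_def)

lemma W'_elem:
  assumes "X \<in> carrier W'"
  obtains u w where "X = (fibre u, w)" "u \<in> U" "w \<in> carrier W"
  using assms by (auto simp: W'_def)

lemma W'_abelian_group: "abelian_group W'"
proof (rule abelian_groupI)
  fix X Y Z assume "X \<in> carrier W'" "Y \<in> carrier W'" "Z \<in> carrier W'"
  then show "X \<oplus>\<^bsub>W'\<^esub> Y \<in> carrier W'"
    and "X \<oplus>\<^bsub>W'\<^esub> Y \<oplus>\<^bsub>W'\<^esub> Z = X \<oplus>\<^bsub>W'\<^esub> (Y \<oplus>\<^bsub>W'\<^esub> Z)"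
    and "X \<oplus>\<^bsub>W'\<^esub> Y = Y \<oplus>\<^bsub>W'\<^esub> X"
    by (elim W'_elem; simp add: M.a_ac)+
next
  fix X assume "X \<in> carrier W'"
  then obtain u w where X: "X = (fibre u, w)" "u \<in> U" "w \<in> carrier W" by (rule W'_elem)
  then show "\<zero>\<^bsub>W'\<^esub> \<oplus>\<^bsub>W'\<^esub> X = X" by (simp add: W'_zero)
  show "\<exists>Y \<in> carrier W'. Y \<oplus>\<^bsub>W'\<^esub> X = \<zero>\<^bsub>W'\<^esub>"
    using X by (intro bexI[of _ "(fibre (\<ominus>\<^bsub>W\<^esub> u), \<ominus>\<^bsub>W\<^esub> w)"]) (auto simp: W'_zero M.l_neg)
qed (simp add: W'_zero)

lemma W'_module: "module R W'"
proof (rule moduleI)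
  fix a c X Y assume a: "a \<in> carrier R" and c: "c \<in> carrier R"
    and "X \<in> carrier W'" "Y \<in> carrier W'"
  then show "a \<odot>\<^bsub>W'\<^esub> X \<in> carrier W'"
    and "(a \<oplus>\<^bsub>R\<^esub> c) \<odot>\<^bsub>W'\<^esub> X = a \<odot>\<^bsub>W'\<^esub> X \<oplus>\<^bsub>W'\<^esub> c \<odot>\<^bsub>W'\<^esub> X"
    and "a \<odot>\<^bsub>W'\<^esub> (X \<oplus>\<^bsub>W'\<^esub> Y) = a \<odot>\<^bsub>W'\<^esub> X \<oplus>\<^bsub>W'\<^esub> a \<odot>\<^bsub>W'\<^esub> Y"
    and "(a \<otimes>\<^bsub>R\<^esub> c) \<odot>\<^bsub>W'\<^esub> X = a \<odot>\<^bsub>W'\<^esub> (c \<odot>\<^bsub>W'\<^esub> X)"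
    by (elim W'_elem;
        simp add: frob_pow_add R.nat_pow_distrib smult_l_distr smult_r_distr smult_assoc1)+
next
  fix X assume "X \<in> carrier W'"
  then show "\<one>\<^bsub>R\<^esub> \<odot>\<^bsub>W'\<^esub> X = X" by (elim W'_elem) simp
qed (simp_all add: R.is_cring W'_abelian_group)

definition \<phi>' :: "(nat \<Rightarrow> 'a) set \<times> 'm \<Rightarrow> (nat \<Rightarrow> 'a) set \<times> 'm" where
  "\<phi>' X = (fibre \<zero>\<^bsub>W\<^esub>, fibre_value (fst X) \<oplus>\<^bsub>W\<^esub> \<phi> (snd X))"

definition \<iota> :: "'m \<Rightarrow> (nat \<Rightarrow> 'a) set \<times> 'm" where
  "\<iota> w = (fibre \<zero>\<^bsub>W\<^esub>, w)"

definition \<psi> :: "(nat \<Rightarrow> 'a) \<Rightarrow> (nat \<Rightarrow> 'a) set \<times> 'm" where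
  "\<psi> r = (fibre (frob_comb r), \<zero>\<^bsub>W\<^esub>)"

lemma \<phi>'_simp [simp]: "u \<in> U \<Longrightarrow> \<phi>' (fibre u, w) = \<iota> (u \<oplus>\<^bsub>W\<^esub> \<phi> w)"
  by (simp add: \<phi>'_def \<iota>_def)

lemma \<iota>_zero: "\<iota> \<zero>\<^bsub>W\<^esub> = \<zero>\<^bsub>W'\<^esub>"
  by (simp add: \<iota>_def W'_zero)

lemma \<iota>_eq_iff [simp]: "\<iota> x = \<iota> y \<longleftrightarrow> x = y"
  by (simp add: \<iota>_def)

lemma \<iota>_closed [simp]: "w \<in> carrier W \<Longrightarrow> \<iota> w \<in> carrier W'"
  by (simp add: \<iota>_def)

lemma \<psi>_closed [simp]: "r \<in> V \<Longrightarrow> \<psi> r \<in> carrier W'"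
  by (auto simp: \<psi>_def)

lemma \<psi>_add: "r \<in> V \<Longrightarrow> s \<in> V \<Longrightarrow> \<psi> (\<lambda>i. r i \<oplus>\<^bsub>R\<^esub> s i) = \<psi> r \<oplus>\<^bsub>W'\<^esub> \<psi> s"
  by (simp add: \<psi>_def frob_comb_add)

lemma \<psi>_smult: "a \<in> carrier R \<Longrightarrow> r \<in> V \<Longrightarrow> \<psi> (\<lambda>i. a \<otimes>\<^bsub>R\<^esub> r i) = a \<odot>\<^bsub>W'\<^esub> \<psi> r"
  by (simp add: \<psi>_def frob_comb_smult)

lemma \<phi>'_\<psi>: "r \<in> V \<Longrightarrow> \<phi>' (\<psi> r) = \<iota> (frob_comb r)"
  by (simp add: \<psi>_def)

lemma \<psi>_kernel: "{r \<in> V. \<psi> r = \<zero>\<^bsub>W'\<^esub>} = frob_preimage R p t (relations R W t g)"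
proof -
  have "\<psi> r = \<zero>\<^bsub>W'\<^esub> \<longleftrightarrow> frob_comb r = \<zero>\<^bsub>W\<^esub>" if "r \<in> V" for r
    using that by (simp add: \<psi>_def W'_zero)
  then show ?thesis
    by (auto simp: frob_preimage_def relations_def frob_comb_def frob_vec)
qed

lemma W'_frob_module: "frob_module R p W' \<phi>'"
  unfolding frob_module_def
proof (intro conjI ballI funcsetI)
  fix X assume "X \<in> carrier W'"
  then show "\<phi>' X \<in> carrier W'" by (elim W'_elem) simp
next
  fix X Y assume "X \<in> carrier W'" "Y \<in> carrier W'"
  then show "\<phi>' (X \<oplus>\<^bsub>W'\<^esub> Y) = \<phi>' X \<oplus>\<^bsub>W'\<^esub> \<phi>' Y"
    by (elim W'_elem) (simp add: \<iota>_def frob_add M.a_ac)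
next
  fix a X assume "a \<in> carrier R" "X \<in> carrier W'"
  then show "\<phi>' (a \<odot>\<^bsub>W'\<^esub> X) = (a [^]\<^bsub>R\<^esub> p) \<odot>\<^bsub>W'\<^esub> \<phi>' X"
    by (elim W'_elem) (simp add: \<iota>_def frob_smult smult_r_distr)
qed (rule W'_module)

sublocale W': frobenius_module R W' p \<phi>'
  by (simp add: frobenius_module_def frobenius_module_axioms_def W'_module W'_frob_module)

lemma W_frobenius_module: "frobenius_module R W p \<phi>"
  by (simp add: frobenius_module_def frobenius_module_axioms_def module_axioms frob_module)

lemma W'_frob_mono: "frob_mono R W \<phi> W' \<phi>' \<iota>"
  by (auto simp: frob_mono_def inj_on_def \<iota>_def)

lemma frob_image_in_\<iota>: "\<phi>' ` carrier W' \<subseteq> \<iota> ` carrier W"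
  by (auto elim!: W'_elem)

lemma W'_torsion_free:
  assumes tf: "x_torsion_free W \<phi>"
  shows "x_torsion_free W' \<phi>'"
  unfolding x_torsion_free_def
proof (intro ballI impI)
  fix X assume X_carrier: "X \<in> carrier W'" and X_zero: "\<phi>' X = \<zero>\<^bsub>W'\<^esub>"
  obtain u w where X: "X = (fibre u, w)" "u \<in> U" "w \<in> carrier W"
    using X_carrier by (rule W'_elem)
  then have sum_zero: "u \<oplus>\<^bsub>W\<^esub> \<phi> w = \<zero>\<^bsub>W\<^esub>" using X_zero by (simp add: \<iota>_def W'_zero)
  then have "u = \<ominus>\<^bsub>W\<^esub> \<phi> w"
    using M.minus_equality[OF sum_zero] X by simp
  also have "\<dots> = \<phi> (\<ominus>\<^bsub>W\<^esub> w)"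
    using X by (simp add: frob_minus)
  finally have "u = \<zero>\<^bsub>W\<^esub>"
    by (rule frob_image_meets_bottom_component[OF below_b U_subset_bottom[OF X(2)] M.a_inv_closed[OF X(3)]])
  moreover have "w = \<zero>\<^bsub>W\<^esub>"
  proof -
    have "\<phi> w = \<zero>\<^bsub>W\<^esub>" using sum_zero \<open>u = \<zero>\<^bsub>W\<^esub>\<close> X(3) by simp
    then show ?thesis using tf X(3) unfolding x_torsion_free_def by blast
  qed
  ultimately show "X = \<zero>\<^bsub>W'\<^esub>" using X by (simp add: W'_zero)
qed

lemma W'_repr:
  assumes "X \<in> carrier W'"
  shows "X = (fibre (fibre_value (fst X)), snd X)" "fibre_value (fst X) \<in> U" "snd X \<in> carrier W"
  using assms by (auto elim!: W'_elem)

lemma W'_finsum: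
  assumes "finite S" and "f \<in> S \<rightarrow> carrier W'"
  shows "finsum W' f S = (fibre (\<Oplus>\<^bsub>W\<^esub> i \<in> S. fibre_value (fst (f i))), \<Oplus>\<^bsub>W\<^esub> i \<in> S. snd (f i))
    \<and> (\<Oplus>\<^bsub>W\<^esub> i \<in> S. fibre_value (fst (f i))) \<in> U"
  using assms
proof (induction S rule: finite_induct)
  case empty
  then show ?case by (simp add: W'.M.finsum_empty W'_zero)
next
  case (insert x S)
  then have fx: "f x \<in> carrier W'" and fS: "f \<in> S \<rightarrow> carrier W'" by auto
  have parts: "(\<lambda>i. fibre_value (fst (f i))) \<in> S \<rightarrow> carrier W" "(\<lambda>i. snd (f i)) \<in> S \<rightarrow> carrier W"
    using fS W'_repr by (auto simp: Pi_iff)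
  obtain u w where fx_eq: "f x = (fibre u, w)" "u \<in> U" "w \<in> carrier W"
    using fx by (rule W'_elem)
  have IH: "finsum W' f S = (fibre (\<Oplus>\<^bsub>W\<^esub> i \<in> S. fibre_value (fst (f i))), \<Oplus>\<^bsub>W\<^esub> i \<in> S. snd (f i))"
    "(\<Oplus>\<^bsub>W\<^esub> i \<in> S. fibre_value (fst (f i))) \<in> U"
    using insert.IH fS by auto
  have "finsum W' f (insert x S) = f x \<oplus>\<^bsub>W'\<^esub> finsum W' f S"
    using insert.hyps fS fx by (rule W'.M.finsum_insert)
  then show ?case
    using insert.hyps fx_eq IH parts by simp
qed

definition D' :: "int \<Rightarrow> ((nat \<Rightarrow> 'a) set \<times> 'm) set" where
  "D' n = (if n = b - 1 then \<psi> ` V else \<iota> ` D n)"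


lemma \<phi>'_\<iota>: "w \<in> carrier W \<Longrightarrow> \<phi>' (\<iota> w) = \<iota> (\<phi> w)"
  by (simp add: \<iota>_def \<phi>'_def)

lemma D'_submodule: "submodule (D' n) R W'"
proof (cases "n = b - 1")
  case True
  have "submodule (\<psi> ` V) R W'"
  proof (rule W'.submoduleI_smult)
    have "\<zero>\<^bsub>W'\<^esub> = \<psi> (\<lambda>i. \<zero>\<^bsub>R\<^esub>)" by (simp add: \<psi>_def W'_zero frob_comb_zero)
    then show "\<zero>\<^bsub>W'\<^esub> \<in> \<psi> ` V" using zero_vec by (rule image_eqI)
  next
    fix x y assume x: "x \<in> \<psi> ` V" and y: "y \<in> \<psi> ` V"
    obtain r where "x = \<psi> r" "r \<in> V" using x by (rule imageE)
    moreover obtain s where "y = \<psi> s" "s \<in> V" using y by (rule imageE)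
    ultimately have "x \<oplus>\<^bsub>W'\<^esub> y = \<psi> (\<lambda>i. r i \<oplus>\<^bsub>R\<^esub> s i)" "(\<lambda>i. r i \<oplus>\<^bsub>R\<^esub> s i) \<in> V"
      by (simp_all add: \<psi>_add add_vec)
    then show "x \<oplus>\<^bsub>W'\<^esub> y \<in> \<psi> ` V" by (rule image_eqI)
  next
    fix a x assume a: "a \<in> carrier R" and x: "x \<in> \<psi> ` V"
    obtain r where "x = \<psi> r" "r \<in> V" using x by (rule imageE)
    then have "a \<odot>\<^bsub>W'\<^esub> x = \<psi> (\<lambda>i. a \<otimes>\<^bsub>R\<^esub> r i)" "(\<lambda>i. a \<otimes>\<^bsub>R\<^esub> r i) \<in> V"
      using a by (simp_all add: \<psi>_smult smult_vec)
    then show "a \<odot>\<^bsub>W'\<^esub> x \<in> \<psi> ` V" by (rule image_eqI)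
  qed auto
  then show ?thesis using True by (simp add: D'_def)
next
  case False
  then show ?thesis
    using submodule_image_frob_mono[OF W_frobenius_module W'.frobenius_module_axioms W'_frob_mono
        component_submodule]
    by (simp add: D'_def)
qed

lemma D'_bottom: "D' (b - 1) = \<psi> ` V"
  by (simp add: D'_def)

lemma D'_above: "n \<noteq> b - 1 \<Longrightarrow> D' n = \<iota> ` D n"
  by (simp add: D'_def)

lemma D'_below: "n < b - 1 \<Longrightarrow> D' n = {\<zero>\<^bsub>W'\<^esub>}"
  using below_b by (simp add: D'_def \<iota>_zero)

lemma D'_frob: "\<phi>' ` D' n \<subseteq> D' (n + 1)"
proof
  fix Y assume "Y \<in> \<phi>' ` D' n"
  then obtain X where X: "X \<in> D' n" and Y: "Y = \<phi>' X" by blast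
  consider "n = b - 1" | "n + 1 = b - 1" | "n \<noteq> b - 1" "n + 1 \<noteq> b - 1" by blast
  then show "Y \<in> D' (n + 1)"
  proof cases
    case 1
    then obtain r where "r \<in> V" "X = \<psi> r" using X by (auto simp: D'_bottom)
    then show ?thesis using 1 Y frob_comb_in_bottom by (simp add: \<phi>'_\<psi> D'_above)
  next
    case 2
    then have "X = \<zero>\<^bsub>W'\<^esub>" using X D'_below[of n] by simp
    then show ?thesis using Y D'_submodule[of "n + 1"] W'.submodule_zero_closed
      by (simp add: W'_zero \<iota>_def)
  next
    case 3
    then obtain x where x: "x \<in> D n" "X = \<iota> x" using X by (auto simp: D'_above)
    moreover have "x \<in> carrier W" using x component_subset by blast
    ultimately have "Y = \<iota> (\<phi> x)" using Y by (simp add: \<phi>'_\<iota>)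
    then show ?thesis using 3 x frob_component by (simp add: D'_above)
  qed
qed

lemma D'_subset: "D' n \<subseteq> carrier W'"
  using W'.submoduleE(1)[OF D'_submodule] .

lemma D'_elem:
  assumes "X \<in> D' n"
  shows "snd X \<in> D n" and "X = (if n = b - 1 then (fst X, \<zero>\<^bsub>W\<^esub>) else \<iota> (snd X))"
    and "n \<noteq> b - 1 \<Longrightarrow> fibre_value (fst X) = \<zero>\<^bsub>W\<^esub>"
  using assms by (auto simp: D'_def \<psi>_def \<iota>_def split: if_splits)

lemma finsum_D':
  assumes d: "\<forall>n. d n \<in> D' n" and S: "finite S" "b - 1 \<in> S"
  shows "finsum W' d S = (fst (d (b - 1)), \<Oplus>\<^bsub>W\<^esub> n \<in> S. snd (d n))"
proof -
  have d_carrier: "d \<in> S \<rightarrow> carrier W'" using d D'_subset by blast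
  let ?u = "fibre_value (fst (d (b - 1)))"
  have "d (b - 1) \<in> carrier W'" using d_carrier S(2) by blast
  then have u: "?u \<in> U" "fst (d (b - 1)) = fibre ?u"
    using W'_repr(1,2)[of "d (b - 1)"] by (metis fst_conv)+
  have "(\<Oplus>\<^bsub>W\<^esub> n \<in> S. fibre_value (fst (d n))) = (\<Oplus>\<^bsub>W\<^esub> n \<in> S. if n = b - 1 then ?u else \<zero>\<^bsub>W\<^esub>)"
    by (rule M.finsum_cong') (use d u(1) D'_elem(3)[of "d n" n for n] in auto)
  also have "\<dots> = ?u"
    using M.add.finprod_singleton_swap[OF S(2,1), of "\<lambda>n. ?u"] u by simp
  finally show ?thesis
    using W'_finsum[OF S(1) d_carrier] u by simp
qed

definition lift_decomposition :: "'m \<Rightarrow> (int \<Rightarrow> 'm) \<Rightarrow> int \<Rightarrow> (nat \<Rightarrow> 'a) set \<times> 'm" where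
  "lift_decomposition u c n = (if n = b - 1 then (fibre u, \<zero>\<^bsub>W\<^esub>) else \<iota> (c n))"

lemma lift_decomposition_in_D':
  assumes "u \<in> U" and "\<forall>n. c n \<in> D n"
  shows "lift_decomposition u c n \<in> D' n"
proof (cases "n = b - 1")
  case True
  obtain r where "r \<in> V" "u = frob_comb r" using assms(1) by blast
  then show ?thesis using True by (simp add: lift_decomposition_def D'_bottom \<psi>_def)
next
  case False
  then show ?thesis using assms(2) by (simp add: lift_decomposition_def D'_above)
qed

lemma finsum_lift_decomposition:
  assumes u: "u \<in> U" and c: "\<forall>n. c n \<in> D n" and S: "finite S" "b - 1 \<in> S" "{n. c n \<noteq> \<zero>\<^bsub>W\<^esub>} \<subseteq> S"
  shows "finsum W' (lift_decomposition u c) S = (fibre u, finsum W c {n. c n \<noteq> \<zero>\<^bsub>W\<^esub>})"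
proof -
  have "c (b - 1) \<in> D (b - 1)" using c by blast
  moreover have "D (b - 1) = {\<zero>\<^bsub>W\<^esub>}" using below_b by simp
  ultimately have "c (b - 1) = \<zero>\<^bsub>W\<^esub>" by simp
  then have "snd (lift_decomposition u c n) = c n" for n
    by (simp add: lift_decomposition_def \<iota>_def)
  moreover have "fst (lift_decomposition u c (b - 1)) = fibre u"
    by (simp add: lift_decomposition_def)
  moreover have "c \<in> S \<rightarrow> carrier W" using c component_subset by blast
  ultimately show ?thesis
    using finsum_D'[OF allI[OF lift_decomposition_in_D'[OF u c]] S(1,2)] finsum_support_superset[OF S(1,3)]
    by simp
qed

lemma W'_graded_decomposition:
  assumes m: "m \<in> carrier W'"
  shows "\<exists>!d. (\<forall>n. d n \<in> D' n) \<and> finite {n. d n \<noteq> \<zero>\<^bsub>W'\<^esub>} \<and> m = finsum W' d {n. d n \<noteq> \<zero>\<^bsub>W'\<^esub>}"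
proof -
  obtain u w where m_eq: "m = (fibre u, w)" and u: "u \<in> U" and w: "w \<in> carrier W"
    using m by (rule W'_elem)
  obtain c where c: "\<forall>n. c n \<in> D n" and c_fin: "finite {n. c n \<noteq> \<zero>\<^bsub>W\<^esub>}"
    and w_eq: "w = finsum W c {n. c n \<noteq> \<zero>\<^bsub>W\<^esub>}"
    using graded_decomposition[OF w] by blast
  let ?d = "lift_decomposition u c"
  have d_support: "{n. ?d n \<noteq> \<zero>\<^bsub>W'\<^esub>} \<subseteq> insert (b - 1) {n. c n \<noteq> \<zero>\<^bsub>W\<^esub>}"
    by (auto simp: lift_decomposition_def \<iota>_def W'_zero)
  show ?thesis
  proof (rule ex1I[of _ ?d])
    have "finsum W' ?d {n. ?d n \<noteq> \<zero>\<^bsub>W'\<^esub>} = finsum W' ?d (insert (b - 1) {n. c n \<noteq> \<zero>\<^bsub>W\<^esub>})"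
      using c_fin d_support lift_decomposition_in_D'[OF u c] D'_subset
      by (intro W'.finsum_support_superset) auto
    then show "(\<forall>n. ?d n \<in> D' n) \<and> finite {n. ?d n \<noteq> \<zero>\<^bsub>W'\<^esub>} \<and> m = finsum W' ?d {n. ?d n \<noteq> \<zero>\<^bsub>W'\<^esub>}"
      using lift_decomposition_in_D'[OF u c] finite_subset[OF d_support] c_fin
        finsum_lift_decomposition[OF u c finite.insertI[OF c_fin] insertI1 subset_insertI] m_eq w_eq
      by auto
  next
    fix d assume d: "(\<forall>n. d n \<in> D' n) \<and> finite {n. d n \<noteq> \<zero>\<^bsub>W'\<^esub>} \<and> m = finsum W' d {n. d n \<noteq> \<zero>\<^bsub>W'\<^esub>}"
    define T where "T = insert (b - 1) {n. d n \<noteq> \<zero>\<^bsub>W'\<^esub>}"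
    have T: "finite T" "b - 1 \<in> T" using d by (auto simp: T_def)
    have "m = finsum W' d T"
      using d D'_subset T by (subst W'.finsum_support_superset[symmetric]) (auto simp: T_def)
    then have fst_d: "fst (d (b - 1)) = fibre u" and snd_d: "(\<Oplus>\<^bsub>W\<^esub> n \<in> T. snd (d n)) = w"
      using finsum_D'[OF _ T] d m_eq by auto
    have snd_d_eq: "(\<lambda>n. snd (d n)) = c"
    proof (rule graded_decomposition_unique)
      show "\<forall>n. snd (d n) \<in> D n" using d D'_elem(1) by blast
      show "{n. snd (d n) \<noteq> \<zero>\<^bsub>W\<^esub>} \<subseteq> T" by (auto simp: T_def W'_zero)
    qed (use c c_fin T snd_d w_eq in auto)
    show "d = ?d"
    proof
      fix n
      have "d n = (if n = b - 1 then (fst (d n), \<zero>\<^bsub>W\<^esub>) else \<iota> (snd (d n)))"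
        using d D'_elem(2) by blast
      then show "d n = ?d n"
        using fst_d snd_d_eq by (auto simp: lift_decomposition_def)
    qed
  qed
qed

lemma W'_graded: "graded_frob_module R p W' \<phi>' D'"
  unfolding graded_frob_module_def
  using W'_frob_module D'_submodule D'_frob W'_graded_decomposition by blast

end

theorem lemma2p8:
  fixes R :: "('a, 'c) ring_scheme" and p t :: nat and b :: int
    and W :: "('a, 'm) module" and \<phi> :: "'m \<Rightarrow> 'm" and D :: "int \<Rightarrow> 'm set"
    and g :: "nat \<Rightarrow> 'm"
  assumes "cring R" and "noetherian_ring R"
    and "nat_prime p" and "ring_char_eq R p"
    and "graded_frob_module R p W \<phi> D"
    and "\<forall>n < b. D n = {\<zero>\<^bsub>W\<^esub>}"
    and "\<forall>i < t. g i \<in> D b"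
  shows "\<exists>(W' :: ('a, (nat \<Rightarrow> 'a) set \<times> 'm) module) \<phi>' D' \<iota> \<psi>.
      graded_frob_module R p W' \<phi>' D'
    \<and> (\<forall>n < b - 1. D' n = {\<zero>\<^bsub>W'\<^esub>})
    \<and> frob_mono R W \<phi> W' \<phi>' \<iota>
    \<and> (\<forall>n \<ge> b. D' n = \<iota> ` D n)
    \<and> \<psi> ` vecs R t = D' (b - 1)
    \<and> (\<forall>r \<in> vecs R t. \<forall>s \<in> vecs R t. \<psi> (\<lambda>i. r i \<oplus>\<^bsub>R\<^esub> s i) = \<psi> r \<oplus>\<^bsub>W'\<^esub> \<psi> s)
    \<and> (\<forall>a \<in> carrier R. \<forall>r \<in> vecs R t. \<psi> (\<lambda>i. a \<otimes>\<^bsub>R\<^esub> r i) = a \<odot>\<^bsub>W'\<^esub> \<psi> r)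
    \<and> {r \<in> vecs R t. \<psi> r = \<zero>\<^bsub>W'\<^esub>} = frob_preimage R p t (relations R W t g)
    \<and> (\<forall>r \<in> vecs R t. \<phi>' (\<psi> r) = \<iota> (\<Oplus>\<^bsub>W\<^esub> i \<in> {..<t}. (r i [^]\<^bsub>R\<^esub> p) \<odot>\<^bsub>W\<^esub> g i))
    \<and> (x_torsion_free W \<phi> \<longrightarrow>
         x_torsion_free W' \<phi>'
         \<and> grann_set R p W' \<phi>' = grann_set R p W \<phi>
         \<and> grann_ideals R p W' \<phi>' = grann_ideals R p W \<phi>)"
proof -
  have "module R W" using assms(5) by (simp add: graded_frob_module_def frob_module_def)
  then interpret frobenius_extension R W p \<phi> D t b g
    using assms
    by (simp add: frobenius_extension_def frobenius_extension_axioms_def graded_frobenius_module_def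
        graded_frobenius_module_axioms_def frobenius_module_def frobenius_module_axioms_def
        graded_frob_module_def)
  have grann_set_eq: "grann_set R p W' \<phi>' = grann_set R p W \<phi>" if "x_torsion_free W \<phi>"
    using grann_set_eq_frob_mono[OF W_frobenius_module W'.frobenius_module_axioms W'_frob_mono
        frob_image_in_\<iota> W'_torsion_free[OF that] p_pos] .
  show ?thesis
    using W'_graded D'_below W'_frob_mono D'_above D'_bottom \<psi>_add \<psi>_smult \<psi>_kernel \<phi>'_\<psi>
      W'_torsion_free grann_set_eq
    by (intro exI[of _ W'] exI[of _ \<phi>'] exI[of _ D'] exI[of _ \<iota>] exI[of _ \<psi>])
      (simp add: frob_comb_def grann_ideals_eq_grann_set)
qed

end
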